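(* For the invertible $N$-component coupled KdV hierarchy (defined in the context), the vector fields $K_s$ are local for all $s\in\mathbf Z$.
   Context: Let $N\ge1$, $\partial=\partial/\partial x$, $\partial^{-1}$ a formal inverse of $\partial$. Let $u_0,\dots,u_{N-1}$ be smooth functions of $(x,t)$ (the fields, $u=(u_0,\dots,u_{N-1})^T$), set $u_N=-1$, and let $\varepsilon_1,\dots,\varepsilon_{N-1}$ be real constants, $\varepsilon_0=\varepsilon_N=0$. Put $J_i=\frac14\varepsilon_i\partial^3+\frac12(u_i\partial+\partial u_i)$, so $J_0=\frac12(u_0\partial+\partial u_0)$ and $J_N=-\partial$; $J_0=u_0^{1/2}\partial u_0^{1/2}$ and $J_N$ are invertible. Formal adjoint: $\partial^\dagger=-\partial$, multiplication operators self-adjoint, $(AB)^\dagger=B^\dagger A^\dagger$, transpose for matrices. Let $B_0$ be the $N\times N$ matrix with $(B_0)_{ij}=-J_{i+j-1}$ if $i+j-1\le N$ and $0$ otherwise, and $R$ the $N\times N$ matrix with $R_{ij}=\delta_{i,j+1}$ ($1\le j\le N-1$), $R_{iN}=-J_{i-1}J_N^{-1}$; $R$ is invertible, and $B_r:=R^rB_0$ ($r\in\mathbf Z$). One-forms: $\gamma_0=(0,\dots,0,2)^T$, $\gamma_{-1}=(u_0^{-1/2},0,\dots,0)^T$, $\gamma_s=(R^\dagger)^s\gamma_0$ and $\gamma_{-s}=((R^{-1})^\dagger)^{s-1}\gamma_{-1}$ for $s\ge1$. The hierarchy consists of the flows $u_{t_{-s}}=K_{-s}:=B_r\gamma_{-r-s}$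 ($s\ge1$, any $r>-s$) and $u_{t_s}=K_s:=B_r\gamma_{-r+s+N}$ ($s\ge0$, any $r\le s+N$), these being independent of $r$; in particular $K_{-s}=B_0\gamma_{-s}$, $K_s=B_N\gamma_s=B_0\gamma_{s+N}$, $K_s=R^sK_0$, $K_{-s}=(R^{-1})^{s-1}K_{-1}$, and explicitly the $i$-th component of $K_0$ is $u_{i-1,x}$ (components $i=1,\dots,N$, $u_{-1}=0$). A vector field (or one-form) is local if each component is a function of the fields and finitely many of their $x$-derivatives (no $\partial^{-1}$ appears). *)

theory Defs
  imports "HOL-Analysis.Analysis"
begin

text \<open>Jet coordinates: j i k stands for the k-th x-derivative of the field u_i.\<close>
type_synonym jet = "nat \<Rightarrow> nat \<Rightarrow> real"

definition jet_of :: "(nat \<Rightarrow> real \<Rightarrow> real) \<Rightarrow> real \<Rightarrow> jet" where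
  "jet_of u x = (\<lambda>i k. (deriv ^^ k) (u i) x)"

definition smooth_fn :: "(real \<Rightarrow> real) \<Rightarrow> bool" where
  "smooth_fn f \<longleftrightarrow> (\<forall>k x. (deriv ^^ k) f differentiable (at x))"

text \<open>Admissible field configurations (x-dependence; t is a spectator):
  smooth fields u_0..u_{N-1}, with u_0 > 0 so that u_0^(1/2) makes sense.\<close>
definition admissible :: "nat \<Rightarrow> (nat \<Rightarrow> real \<Rightarrow> real) \<Rightarrow> bool" where
  "admissible N u \<longleftrightarrow> (\<forall>i<N. smooth_fn (u i)) \<and> (\<forall>x. u 0 x > 0)"

definition is_local :: "nat \<Rightarrow> (jet \<Rightarrow> real) \<Rightarrow> bool" where
  "is_local N F \<longleftrightarrow>
     (\<exists>m. \<forall>j j'. (\<forall>i<N. \<forall>k\<le>m. j i k = j' i k) \<longrightarrow> F j = F j')"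

definition fld :: "nat \<Rightarrow> (nat \<Rightarrow> real \<Rightarrow> real) \<Rightarrow> nat \<Rightarrow> real \<Rightarrow> real" where
  "fld N u i x = (if i < N then u i x else if i = N then -1 else 0)"

definition epsc :: "nat \<Rightarrow> (nat \<Rightarrow> real) \<Rightarrow> nat \<Rightarrow> real" where
  "epsc N \<epsilon> i = (if 0 < i \<and> i < N then \<epsilon> i else 0)"

text \<open>J_i g = 1/4 eps_i g''' + 1/2 (u_i g' + (u_i g)') = 1/4 eps_i g''' + u_i g' + 1/2 u_i' g.\<close>
definition Jop :: "nat \<Rightarrow> (nat \<Rightarrow> real) \<Rightarrow> (nat \<Rightarrow> real \<Rightarrow> real) \<Rightarrow> nat
                    \<Rightarrow> (real \<Rightarrow> real) \<Rightarrow> real \<Rightarrow> real" where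
  "Jop N \<epsilon> u i g x =
     epsc N \<epsilon> i / 4 * (deriv ^^ 3) g x + fld N u i x * deriv g x
     + 1 / 2 * deriv (fld N u i) x * g x"

text \<open>K s i (components i = 1..N) is a realisation of the hierarchy:
  K_0 and K_{-1} = B_0 gamma_{-1} as given, K_{s+1} = R K_s (s \<ge> 0) and
  K_{s-1} = R^{-1} K_s (s \<le> -1), where the formal inverses
  J_N^{-1} = -\<partial>^{-1} and J_0^{-1} are realised by differential functions w, z:
  (R V)_i = V_{i-1} + J_{i-1} w with \<partial> w = V_N (V_0 = 0);
  (R^{-1} W)_i = W_{i+1} - J_i z with J_0 z = W_1 (W_{N+1} = 0).\<close>
definition cKdV_hierarchy :: "nat \<Rightarrow> (nat \<Rightarrow> real) \<Rightarrow> (int \<Rightarrow> nat \<Rightarrow> jet \<Rightarrow> real) \<Rightarrow> bool" where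
  "cKdV_hierarchy N \<epsilon> K \<longleftrightarrow>
   (\<forall>u x. admissible N u \<longrightarrow> (\<forall>i\<in>{1..N}.
       K 0 i (jet_of u x) = deriv (u (i - 1)) x \<and>
       K (-1) i (jet_of u x) = - Jop N \<epsilon> u i (\<lambda>y. 1 / sqrt (u 0 y)) x))
   \<and> (\<forall>s\<ge>0. \<exists>w. \<forall>u. admissible N u \<longrightarrow>
         smooth_fn (\<lambda>y. w (jet_of u y)) \<and>
         (\<forall>x. ((\<lambda>y. w (jet_of u y)) has_real_derivative K s N (jet_of u x)) (at x)) \<and>
         (\<forall>x. \<forall>i\<in>{1..N}. K (s + 1) i (jet_of u x) =
              (if i = 1 then 0 else K s (i - 1) (jet_of u x))
              + Jop N \<epsilon> u (i - 1) (\<lambda>y. w (jet_of u y)) x))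
   \<and> (\<forall>s\<le>-1. \<exists>z. \<forall>u. admissible N u \<longrightarrow>
         smooth_fn (\<lambda>y. z (jet_of u y)) \<and>
         (\<forall>x. Jop N \<epsilon> u 0 (\<lambda>y. z (jet_of u y)) x = K s 1 (jet_of u x)) \<and>
         (\<forall>x. \<forall>i\<in>{1..N}. K (s - 1) i (jet_of u x) =
              (if i = N then 0 else K s (i + 1) (jet_of u x))
              - Jop N \<epsilon> u i (\<lambda>y. z (jet_of u y)) x))"

end

theory Submission
  imports Defs
begin

text \<open>The flows are built from the operators \<open>J\<^sub>i\<close> and two sequences of differential functions
  \<open>a\<^sub>n\<close>, \<open>b\<^sub>n\<close> which realise the formal inverses \<open>J\<^sub>N\<^sup>-\<^sup>1 = -\<partial>\<^sup>-\<^sup>1\<close> and \<open>J\<^sub>0\<^sup>-\<^sup>1\<close> occurring in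
  \<open>R\<close> and \<open>R\<^sup>-\<^sup>1\<close>. With \<open>S\<^sub>i a = \<epsilon>\<^sub>i/4 (a a\<^sub>x\<^sub>x - a\<^sub>x\<^sup>2/2) + u\<^sub>i a\<^sup>2/2\<close>, so that \<open>\<partial> S\<^sub>i a = a J\<^sub>i a\<close>,
  the series \<open>a = \<Sum> a\<^sub>n \<lambda>\<^sup>-\<^sup>n\<close> is determined by requiring every coefficient of
  \<open>\<Sum>\<^sub>i \<lambda>\<^sup>-\<^sup>i S\<^sub>N\<^sub>-\<^sub>i a\<close> to be constant: the coefficient of \<open>\<lambda>\<^sup>-\<^sup>n\<close> is affine in \<open>a\<^sub>n\<close> with the invertible
  slope \<open>u\<^sub>N a\<^sub>0 = -2\<close>, so each \<open>a\<^sub>n\<close> is an explicit polynomial expression in \<open>a\<^sub>0, \<dots>, a\<^sub>n\<^sub>-\<^sub>1\<close> and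
  their derivatives, hence local. Differentiating these conservation laws gives
  \<open>a \<cdot> \<Sum>\<^sub>i \<lambda>\<^sup>-\<^sup>i J\<^sub>N\<^sub>-\<^sub>i a = 0\<close>, and since \<open>a\<^sub>0 \<noteq> 0\<close> this is the recursion
  \<open>\<partial> a\<^sub>s\<^sub>+\<^sub>1 = \<Sum>\<^sub>k J\<^sub>N\<^sub>-\<^sub>1\<^sub>-\<^sub>k a\<^sub>s\<^sub>-\<^sub>k\<close> needed to raise \<open>K\<^sub>s\<close> to \<open>K\<^sub>s\<^sub>+\<^sub>1\<close> locally. The series \<open>b\<close> with
  \<open>b\<^sub>0 = u\<^sub>0\<^sup>-\<^sup>1\<^sup>/\<^sup>2\<close> and the pencil \<open>\<Sum>\<^sub>i \<lambda>\<^sup>-\<^sup>i S\<^sub>i\<close> treats the negative flows in the same way.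
  Locality is tracked by a coinductive class of local functions whose total \<open>x\<close>-derivative is
  again in the class; it is closed under the ring operations and real powers of \<open>u\<^sub>0\<close>.\<close>

lemma sum_convolution_swap:
  "(\<Sum>k\<le>m. f k (m - k)) = (\<Sum>k\<le>m. f (m - k) (k::nat))"
  by (rule sum.reindex_bij_witness[where i = "\<lambda>k. m - k" and j = "\<lambda>k. m - k"]) auto

lemma sum_triangle_swap:
  fixes N n :: nat
  shows "(\<Sum>i\<le>N. if i \<le> n then \<Sum>k\<le>n - i. f i k else 0) = (\<Sum>k\<le>n. \<Sum>i\<le>N. if i \<le> n - k then f i k else 0)"
proof -
  have "(if i \<le> n then \<Sum>k\<le>n - i. f i k else 0) = (\<Sum>k\<le>n. if i + k \<le> n then f i k else 0)" for i
  proof -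
    have "{k \<in> {..n}. i + k \<le> n} = (if i \<le> n then {..n - i} else {})" by auto
    then show ?thesis using sum.inter_filter[of "{..n}" "f i" "\<lambda>k. i + k \<le> n"]
      by (auto split: if_splits)
  qed
  moreover have "(\<Sum>i\<le>N. if i \<le> n - k then f i k else 0) = (\<Sum>i\<le>N. if i + k \<le> n then f i k else 0)"
    if "k \<le> n" for k
    using that by (intro sum.cong) auto
  ultimately show ?thesis by (simp add: sum.swap[of _ "{..N}"])
qed

lemma convolution_eq_0_imp_eq_0:
  fixes a e :: "nat \<Rightarrow> 'a::idom"
  assumes conv: "\<And>n. (\<Sum>k\<le>n. a k * e (n - k)) = 0" and "a 0 \<noteq> 0"
  shows "e n = 0"
proof (induction n rule: less_induct)
  case (less n)
  have "(\<Sum>k\<le>n. a k * e (n - k)) = a 0 * e n + (\<Sum>k<n. a (Suc k) * e (n - Suc k))"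
    by (subst sum.atMost_shift) simp
  also have "(\<Sum>k<n. a (Suc k) * e (n - Suc k)) = 0"
    using less by (intro sum.neutral) auto
  finally show ?case using conv[of n] \<open>a 0 \<noteq> 0\<close> by simp
qed

lemma sum_atMost_split_ends:
  assumes "0 < n"
  shows "(\<Sum>k\<le>n. f k) = f 0 + f n + (\<Sum>k\<in>{1..<n}. f (k::nat))"
proof -
  have "{..n} = insert 0 (insert n {1..<n})"
    using assms by auto
  then show ?thesis
    using assms by (simp add: add.assoc)
qed

section \<open>Differential functions\<close>

definition has_total_deriv :: "nat \<Rightarrow> (jet \<Rightarrow> real) \<Rightarrow> (jet \<Rightarrow> real) \<Rightarrow> bool" where
  "has_total_deriv N F G \<longleftrightarrow> (\<forall>u x. admissible N u \<longrightarrow>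
      ((\<lambda>y. F (jet_of u y)) has_real_derivative G (jet_of u x)) (at x))"

coinductive diff_fun :: "nat \<Rightarrow> (jet \<Rightarrow> real) \<Rightarrow> bool" for N where
  "is_local N F \<Longrightarrow> has_total_deriv N F G \<Longrightarrow> diff_fun N G \<Longrightarrow> diff_fun N F"

text \<open>\<open>total_deriv N F\<close> is pinned down only on jets of admissible configurations.\<close>

definition total_deriv :: "nat \<Rightarrow> (jet \<Rightarrow> real) \<Rightarrow> jet \<Rightarrow> real" where
  "total_deriv N F = (SOME G. has_total_deriv N F G \<and> diff_fun N G)"

lemma diff_fun_is_local: "diff_fun N F \<Longrightarrow> is_local N F"
  by (erule diff_fun.cases) auto

lemma
  assumes "diff_fun N F"
  shows diff_fun_total_deriv: "diff_fun N (total_deriv N F)"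
    and has_total_deriv_total_deriv: "has_total_deriv N F (total_deriv N F)"
proof -
  from assms obtain G where "has_total_deriv N F G \<and> diff_fun N G"
    by (cases rule: diff_fun.cases) auto
  then have "has_total_deriv N F (total_deriv N F) \<and> diff_fun N (total_deriv N F)"
    unfolding total_deriv_def by (rule someI[where P = "\<lambda>G. has_total_deriv N F G \<and> diff_fun N G"])
  then show "diff_fun N (total_deriv N F)" "has_total_deriv N F (total_deriv N F)" by auto
qed

lemma DERIV_total_deriv:
  assumes "diff_fun N F" "admissible N u"
  shows "((\<lambda>y. F (jet_of u y)) has_real_derivative total_deriv N F (jet_of u x)) (at x)"
  using has_total_deriv_total_deriv[OF assms(1)] assms(2) unfolding has_total_deriv_def by blast

lemma diff_fun_funpow_total_deriv: "diff_fun N F \<Longrightarrow> diff_fun N ((total_deriv N ^^ k) F)"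
  by (induction k) (auto intro: diff_fun_total_deriv)

lemma higher_deriv_total_deriv:
  assumes "diff_fun N F" "admissible N u"
  shows "(deriv ^^ k) (\<lambda>y. F (jet_of u y)) = (\<lambda>y. (total_deriv N ^^ k) F (jet_of u y))"
proof (induction k)
  case (Suc k)
  then show ?case
    using DERIV_total_deriv[OF diff_fun_funpow_total_deriv[OF assms(1)] assms(2)]
    by (auto intro!: ext DERIV_imp_deriv)
qed simp

lemma smooth_fn_diff_fun:
  assumes "diff_fun N F" "admissible N u"
  shows "smooth_fn (\<lambda>y. F (jet_of u y))"
  unfolding smooth_fn_def higher_deriv_total_deriv[OF assms]
  using DERIV_total_deriv[OF diff_fun_funpow_total_deriv[OF assms(1)] assms(2)]
    real_differentiable_def by blast

lemma is_local_comp2: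
  assumes "is_local N F" "is_local N G"
  shows "is_local N (\<lambda>j. f (F j) (G j))"
proof -
  obtain m1 where "\<forall>j j'. (\<forall>i<N. \<forall>k\<le>m1. j i k = j' i k) \<longrightarrow> F j = F j'"
    using assms(1) is_local_def by blast
  moreover obtain m2 where "\<forall>j j'. (\<forall>i<N. \<forall>k\<le>m2. j i k = j' i k) \<longrightarrow> G j = G j'"
    using assms(2) is_local_def by blast
  ultimately show ?thesis unfolding is_local_def
    by (intro exI[of _ "max m1 m2"]) (metis max.cobounded1 max.cobounded2 order.trans)
qed

lemma is_local_const: "is_local N (\<lambda>_. c)"
  by (auto simp: is_local_def)

lemma is_local_coord: "i < N \<Longrightarrow> is_local N (\<lambda>j. j i k)"
  unfolding is_local_def by (intro exI[of _ k]) auto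

inductive add_closure :: "(('a \<Rightarrow> 'b::comm_monoid_add) \<Rightarrow> bool) \<Rightarrow> ('a \<Rightarrow> 'b) \<Rightarrow> bool"
  for P where
  base: "P F \<Longrightarrow> add_closure P F"
| zero: "add_closure P (\<lambda>_. 0)"
| add: "add_closure P F \<Longrightarrow> add_closure P G \<Longrightarrow> add_closure P (\<lambda>j. F j + G j)"

text \<open>Coinduction up to sums: derivatives need only be finite sums of candidates and of known
  differential functions.\<close>

lemma diff_fun_coinduct_add_closure:
  assumes step: "\<And>F. X F \<Longrightarrow> is_local N F \<and>
      (\<exists>G. has_total_deriv N F G \<and> add_closure (\<lambda>H. X H \<or> diff_fun N H) G)"
    and F: "add_closure (\<lambda>H. X H \<or> diff_fun N H) F"
  shows "diff_fun N F"
proof -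
  let ?C = "add_closure (\<lambda>H. X H \<or> diff_fun N H)"
  have closed: "is_local N F \<and> (\<exists>G. has_total_deriv N F G \<and> ?C G)" if "?C F" for F
    using that
  proof (induction rule: add_closure.induct)
    case (base F)
    then show ?case
      using step diff_fun_is_local diff_fun_total_deriv has_total_deriv_total_deriv
      by (blast intro: add_closure.base)
  next
    case zero
    have "has_total_deriv N (\<lambda>_. 0) (\<lambda>_. 0)"
      by (simp add: has_total_deriv_def)
    then show ?case by (blast intro: is_local_const add_closure.zero)
  next
    case (add F G)
    then obtain F' G' where "has_total_deriv N F F'" "has_total_deriv N G G'" "?C F'" "?C G'"
      by blast
    then have "has_total_deriv N (\<lambda>j. F j + G j) (\<lambda>j. F' j + G' j)" "?C (\<lambda>j. F' j + G' j)"
      by (auto simp: has_total_deriv_def intro: DERIV_add add_closure.add)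
    then show ?case using add by (blast intro: is_local_comp2)
  qed
  from F show ?thesis
    by (coinduction arbitrary: F rule: diff_fun.coinduct) (use closed in blast)
qed

lemma diff_fun_const: "diff_fun N (\<lambda>_. c)"
proof (rule diff_fun_coinduct_add_closure[where X = "\<lambda>F. F = (\<lambda>_. c)"])
  show "is_local N F \<and> (\<exists>G. has_total_deriv N F G \<and> add_closure (\<lambda>H. H = (\<lambda>_. c) \<or> diff_fun N H) G)"
    if "F = (\<lambda>_. c)" for F
    using that by (auto simp: has_total_deriv_def is_local_const intro!: exI add_closure.zero)
qed (auto intro: add_closure.base)

lemma DERIV_jet_coord:
  assumes "admissible N u" "i < N"
  shows "((\<lambda>y. jet_of u y i k) has_real_derivative jet_of u x i (Suc k)) (at x)"
proof -
  have "(deriv ^^ k) (u i) differentiable (at x)"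
    using assms unfolding admissible_def smooth_fn_def by blast
  then show ?thesis
    unfolding jet_of_def by (simp add: DERIV_deriv_iff_real_differentiable)
qed

lemma diff_fun_coord:
  assumes "i < N"
  shows "diff_fun N (\<lambda>j. j i k)"
proof (rule diff_fun_coinduct_add_closure[where X = "\<lambda>F. \<exists>k. F = (\<lambda>j. j i k)"])
  show "is_local N F \<and> (\<exists>G. has_total_deriv N F G \<and>
      add_closure (\<lambda>H. (\<exists>k. H = (\<lambda>j. j i k)) \<or> diff_fun N H) G)"
    if "\<exists>k. F = (\<lambda>j. j i k)" for F
  proof -
    from that obtain k where F: "F = (\<lambda>j. j i k)" ..
    have "has_total_deriv N F (\<lambda>j. j i (Suc k))"
      unfolding has_total_deriv_def F using assms by (blast intro: DERIV_jet_coord)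
    then show ?thesis
      using F assms by (blast intro: is_local_coord add_closure.base)
  qed
qed (auto intro: add_closure.base)

lemma diff_fun_add:
  assumes "diff_fun N F" "diff_fun N G"
  shows "diff_fun N (\<lambda>j. F j + G j)"
  by (rule diff_fun_coinduct_add_closure[where X = "\<lambda>_. False"])
    (use assms in \<open>auto intro: add_closure.add add_closure.base\<close>)

lemma diff_fun_mult:
  assumes "diff_fun N F" "diff_fun N G"
  shows "diff_fun N (\<lambda>j. F j * G j)"
proof -
  let ?X = "\<lambda>H. \<exists>F G. diff_fun N F \<and> diff_fun N G \<and> H = (\<lambda>j. F j * G j)"
  show ?thesis
  proof (rule diff_fun_coinduct_add_closure[where X = ?X])
    fix H assume "?X H"
    then obtain F G where FG: "diff_fun N F" "diff_fun N G" and H: "H = (\<lambda>j. F j * G j)"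
      by blast
    let ?H' = "\<lambda>j. F j * total_deriv N G j + total_deriv N F j * G j"
    have "has_total_deriv N H ?H'"
      unfolding has_total_deriv_def H by (auto intro!: DERIV_mult' DERIV_total_deriv FG)
    moreover have "add_closure (\<lambda>H. ?X H \<or> diff_fun N H) ?H'"
      by (intro add_closure.add add_closure.base) (blast intro: FG diff_fun_total_deriv)+
    ultimately show "is_local N H \<and> (\<exists>H'. has_total_deriv N H H' \<and> add_closure (\<lambda>H. ?X H \<or> diff_fun N H) H')"
      using FG H by (blast intro: is_local_comp2 diff_fun_is_local)
  qed (use assms in \<open>blast intro: add_closure.base\<close>)
qed

lemma diff_fun_diff:
  assumes "diff_fun N F" "diff_fun N G"
  shows "diff_fun N (\<lambda>j. F j - G j)"
  using diff_fun_add[OF assms(1) diff_fun_mult[OF diff_fun_const assms(2)], of "-1"] by simp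

lemma diff_fun_uminus: "diff_fun N F \<Longrightarrow> diff_fun N (\<lambda>j. - F j)"
  by (drule diff_fun_diff[OF diff_fun_const[of N 0]]) simp

lemma diff_fun_sum:
  "finite S \<Longrightarrow> (\<And>k. k \<in> S \<Longrightarrow> diff_fun N (F k)) \<Longrightarrow> diff_fun N (\<lambda>j. \<Sum>k\<in>S. F k j)"
  by (induction S rule: finite_induct) (auto intro: diff_fun_const diff_fun_add)

lemma diff_fun_if: "diff_fun N F \<Longrightarrow> diff_fun N G \<Longrightarrow> diff_fun N (\<lambda>j. if P then F j else G j)"
  by (cases P) simp_all

text \<open>This relies on the positivity of \<open>u\<^sub>0\<close> built into admissibility.\<close>

lemma diff_fun_coord0_powr:
  assumes "0 < N"
  shows "diff_fun N (\<lambda>j. j 0 0 powr r)"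
proof -
  let ?X = "\<lambda>H. \<exists>G r. diff_fun N G \<and> H = (\<lambda>j. G j * j 0 0 powr r)"
  have "diff_fun N (\<lambda>j. 1 * j 0 0 powr r)"
  proof (rule diff_fun_coinduct_add_closure[where X = ?X])
    fix H assume "?X H"
    then obtain G r where G: "diff_fun N G" and H: "H = (\<lambda>j. G j * j 0 0 powr r)"
      by blast
    let ?G' = "\<lambda>j. r * G j * j 0 1"
    let ?H' = "\<lambda>j. total_deriv N G j * j 0 0 powr r + ?G' j * j 0 0 powr (r - 1)"
    have "has_total_deriv N H ?H'"
      unfolding has_total_deriv_def H
    proof (intro allI impI)
      fix u x assume u: "admissible N u"
      have "jet_of u x 0 0 > 0"
        using u by (simp add: admissible_def jet_of_def)
      from DERIV_mult'[OF DERIV_total_deriv[OF G u] DERIV_fun_powr[OF DERIV_jet_coord[OF u assms] this]]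
      show "((\<lambda>y. G (jet_of u y) * jet_of u y 0 0 powr r) has_real_derivative ?H' (jet_of u x)) (at x)"
        by (simp add: algebra_simps)
    qed
    moreover have "add_closure (\<lambda>H. ?X H \<or> diff_fun N H) ?H'"
    proof (intro add_closure.add add_closure.base disjI1)
      show "?X (\<lambda>j. total_deriv N G j * j 0 0 powr r)"
        using diff_fun_total_deriv[OF G] by (intro exI[of _ "total_deriv N G"] exI[of _ r]) simp
      have "diff_fun N ?G'"
        by (intro diff_fun_mult diff_fun_const diff_fun_coord G assms)
      then show "?X (\<lambda>j. ?G' j * j 0 0 powr (r - 1))"
        by (intro exI[of _ ?G'] exI[of _ "r - 1"]) simp
    qed
    moreover have "is_local N H"
      unfolding H by (rule is_local_comp2[OF diff_fun_is_local[OF G] is_local_coord[OF assms]])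
    ultimately show "is_local N H \<and> (\<exists>H'. has_total_deriv N H H' \<and> add_closure (\<lambda>H. ?X H \<or> diff_fun N H) H')"
      by blast
  qed (intro add_closure.base disjI1 exI[of _ "\<lambda>_. 1"] exI[of _ r] conjI diff_fun_const refl)
  then show ?thesis by simp
qed

definition field_jet :: "nat \<Rightarrow> nat \<Rightarrow> jet \<Rightarrow> real" where
  "field_jet N i j = (if i < N then j i 0 else if i = N then -1 else 0)"

definition field_jet_x :: "nat \<Rightarrow> nat \<Rightarrow> jet \<Rightarrow> real" where
  "field_jet_x N i j = (if i < N then j i 1 else 0)"

definition J_jet :: "nat \<Rightarrow> (nat \<Rightarrow> real) \<Rightarrow> nat \<Rightarrow> (jet \<Rightarrow> real) \<Rightarrow> jet \<Rightarrow> real" where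
  "J_jet N \<epsilon> i F j = epsc N \<epsilon> i / 4 * total_deriv N (total_deriv N (total_deriv N F)) j
     + field_jet N i j * total_deriv N F j + 1/2 * field_jet_x N i j * F j"

lemma diff_fun_field_jet: "diff_fun N (field_jet N i)"
  by (cases "i < N") (simp_all add: field_jet_def[abs_def] diff_fun_coord diff_fun_const)

lemma diff_fun_field_jet_x: "diff_fun N (field_jet_x N i)"
  by (cases "i < N") (simp_all add: field_jet_x_def[abs_def] diff_fun_coord diff_fun_const)

lemma diff_fun_J_jet: "diff_fun N F \<Longrightarrow> diff_fun N (J_jet N \<epsilon> i F)"
  unfolding J_jet_def[abs_def]
  by (intro diff_fun_add diff_fun_mult diff_fun_const diff_fun_total_deriv
      diff_fun_field_jet diff_fun_field_jet_x)

lemma J_jet_last: "J_jet N \<epsilon> N F j = - total_deriv N F j"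
  by (simp add: J_jet_def epsc_def field_jet_def field_jet_x_def)

locale admissible_fields =
  fixes N :: nat and u :: "nat \<Rightarrow> real \<Rightarrow> real"
  assumes admissible: "admissible N u"
begin

lemma fld_eq_field_jet: "fld N u i x = field_jet N i (jet_of u x)"
  by (simp add: fld_def field_jet_def jet_of_def)

lemma DERIV_field_jet:
  "((\<lambda>y. field_jet N i (jet_of u y)) has_real_derivative field_jet_x N i (jet_of u x)) (at x)"
  using DERIV_jet_coord[OF admissible, of i 0 x] by (simp add: field_jet_def field_jet_x_def)

lemma Jop_eq_J_jet:
  assumes "diff_fun N F"
  shows "Jop N \<epsilon> u i (\<lambda>y. F (jet_of u y)) x = J_jet N \<epsilon> i F (jet_of u x)"
proof -
  have D: "(deriv ^^ k) (\<lambda>y. F (jet_of u y)) x = (total_deriv N ^^ k) F (jet_of u x)" for k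
    by (simp add: higher_deriv_total_deriv[OF assms admissible])
  have "deriv (fld N u i) x = field_jet_x N i (jet_of u x)"
    unfolding fld_eq_field_jet[abs_def] by (rule DERIV_imp_deriv[OF DERIV_field_jet])
  moreover have "deriv (\<lambda>y. F (jet_of u y)) x = total_deriv N F (jet_of u x)"
    using D[of 1] by simp
  moreover have "(deriv ^^ 3) (\<lambda>y. F (jet_of u y)) x =
      total_deriv N (total_deriv N (total_deriv N F)) (jet_of u x)"
    using D[of 3] by (simp add: numeral_3_eq_3)
  ultimately show ?thesis
    by (simp add: Jop_def J_jet_def fld_eq_field_jet)
qed

lemma total_deriv_eq_0_if_constant:
  assumes "diff_fun N F" "\<And>y. F (jet_of u y) = c"
  shows "total_deriv N F (jet_of u x) = 0"
proof -
  have "((\<lambda>_. c) has_real_derivative total_deriv N F (jet_of u x)) (at x)"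
    using DERIV_total_deriv[OF assms(1) admissible] assms(2) by simp
  then show ?thesis using DERIV_const DERIV_unique by blast
qed

lemma J_jet_const: "J_jet N \<epsilon> i (\<lambda>_. c) (jet_of u x) = c / 2 * field_jet_x N i (jet_of u x)"
proof -
  have D: "diff_fun N (total_deriv N (\<lambda>_. c))" "diff_fun N (total_deriv N (total_deriv N (\<lambda>_. c)))"
    by (intro diff_fun_total_deriv diff_fun_const)+
  have "total_deriv N (\<lambda>_. c) (jet_of u y) = 0" for y
    by (rule total_deriv_eq_0_if_constant[OF diff_fun_const]) simp
  moreover from this have "total_deriv N (total_deriv N (\<lambda>_. c)) (jet_of u y) = 0" for y
    by (rule total_deriv_eq_0_if_constant[OF D(1)])
  ultimately show ?thesis
    using total_deriv_eq_0_if_constant[OF D(2)] by (simp add: J_jet_def)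
qed

end

section \<open>Quadratic densities and the Lenard pencil\<close>

text \<open>Bilinear form of \<open>S\<^sub>i a = \<epsilon>\<^sub>i/4 (a a\<^sub>x\<^sub>x - a\<^sub>x\<^sup>2/2) + u\<^sub>i a\<^sup>2/2\<close>; its derivative differs from
  \<open>F J\<^sub>i G\<close> by the antisymmetric \<open>quad_skew\<close>, which cancels in symmetric convolutions.\<close>

definition quad_form :: "nat \<Rightarrow> (nat \<Rightarrow> real) \<Rightarrow> nat \<Rightarrow> (jet \<Rightarrow> real) \<Rightarrow> (jet \<Rightarrow> real) \<Rightarrow> jet \<Rightarrow> real"
  where "quad_form N \<epsilon> i F G j =
    epsc N \<epsilon> i / 4 * (F j * total_deriv N (total_deriv N G) j - 1/2 * total_deriv N F j * total_deriv N G j)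
    + 1/2 * field_jet N i j * F j * G j"

definition quad_skew :: "nat \<Rightarrow> (nat \<Rightarrow> real) \<Rightarrow> nat \<Rightarrow> (jet \<Rightarrow> real) \<Rightarrow> (jet \<Rightarrow> real) \<Rightarrow> jet \<Rightarrow> real"
  where "quad_skew N \<epsilon> i F G j =
    epsc N \<epsilon> i / 8 * (total_deriv N F j * total_deriv N (total_deriv N G) j
                      - total_deriv N (total_deriv N F) j * total_deriv N G j)
    + 1/2 * field_jet N i j * (total_deriv N F j * G j - F j * total_deriv N G j)"

lemma quad_skew_antisym: "quad_skew N \<epsilon> i F G j = - quad_skew N \<epsilon> i G F j"
  by (simp add: quad_skew_def algebra_simps)

lemma diff_fun_quad_form: "diff_fun N F \<Longrightarrow> diff_fun N G \<Longrightarrow> diff_fun N (quad_form N \<epsilon> i F G)"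
  unfolding quad_form_def[abs_def]
  by (intro diff_fun_add diff_fun_diff diff_fun_mult diff_fun_const diff_fun_total_deriv diff_fun_field_jet)

lemma (in admissible_fields) DERIV_quad_form:
  assumes F: "diff_fun N F" and G: "diff_fun N G"
  shows "((\<lambda>y. quad_form N \<epsilon> i F G (jet_of u y)) has_real_derivative
           F (jet_of u x) * J_jet N \<epsilon> i G (jet_of u x) + quad_skew N \<epsilon> i F G (jet_of u x)) (at x)"
proof -
  have d: "\<And>H. diff_fun N H \<Longrightarrow>
      ((\<lambda>y. H (jet_of u y)) has_real_derivative total_deriv N H (jet_of u x)) (at x)"
    using DERIV_total_deriv[OF _ admissible] .
  note d = d[OF F] d[OF diff_fun_total_deriv[OF F]] d[OF G] d[OF diff_fun_total_deriv[OF G]]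
    d[OF diff_fun_total_deriv[OF diff_fun_total_deriv[OF G]]]
  show ?thesis
    unfolding quad_form_def
    by (rule derivative_eq_intros d DERIV_field_jet refl | assumption)+
      (simp add: J_jet_def quad_skew_def algebra_simps)
qed

definition quad_conv :: "nat \<Rightarrow> (nat \<Rightarrow> real) \<Rightarrow> nat \<Rightarrow> (nat \<Rightarrow> jet \<Rightarrow> real) \<Rightarrow> nat \<Rightarrow> jet \<Rightarrow> real"
  where "quad_conv N \<epsilon> i A m j = (\<Sum>k\<le>m. quad_form N \<epsilon> i (A k) (A (m - k)) j)"

text \<open>Coefficients of \<open>\<lambda>\<^sup>-\<^sup>n\<close> in \<open>\<Sum>\<^sub>i \<lambda>\<^sup>-\<^sup>i S\<^sub>\<sigma>\<^sub>(\<^sub>i\<^sub>) a\<close> and in \<open>\<Sum>\<^sub>i \<lambda>\<^sup>-\<^sup>i J\<^sub>\<sigma>\<^sub>(\<^sub>i\<^sub>) a\<close>, for the formal series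
  \<open>a = \<Sum>\<^sub>k A\<^sub>k \<lambda>\<^sup>-\<^sup>k\<close>.\<close>

definition pencil_density :: "nat \<Rightarrow> (nat \<Rightarrow> real) \<Rightarrow> (nat \<Rightarrow> nat) \<Rightarrow> (nat \<Rightarrow> jet \<Rightarrow> real) \<Rightarrow> nat \<Rightarrow> jet \<Rightarrow> real"
  where "pencil_density N \<epsilon> \<sigma> A n j = (\<Sum>i\<le>N. if i \<le> n then quad_conv N \<epsilon> (\<sigma> i) A (n - i) j else 0)"

definition pencil_apply :: "nat \<Rightarrow> (nat \<Rightarrow> real) \<Rightarrow> (nat \<Rightarrow> nat) \<Rightarrow> (nat \<Rightarrow> jet \<Rightarrow> real) \<Rightarrow> nat \<Rightarrow> jet \<Rightarrow> real"
  where "pencil_apply N \<epsilon> \<sigma> A m j = (\<Sum>i\<le>N. if i \<le> m then J_jet N \<epsilon> (\<sigma> i) (A (m - i)) j else 0)"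

context admissible_fields
begin

lemma DERIV_quad_conv:
  assumes A: "\<And>k. diff_fun N (A k)"
  shows "((\<lambda>y. quad_conv N \<epsilon> i A m (jet_of u y)) has_real_derivative
           (\<Sum>k\<le>m. A k (jet_of u x) * J_jet N \<epsilon> i (A (m - k)) (jet_of u x))) (at x)"
proof -
  let ?skew = "\<lambda>k l. quad_skew N \<epsilon> i (A k) (A l) (jet_of u x)"
  have "(\<Sum>k\<le>m. ?skew k (m - k)) = (\<Sum>k\<le>m. ?skew (m - k) k)"
    by (rule sum_convolution_swap)
  also have "\<dots> = - (\<Sum>k\<le>m. ?skew k (m - k))"
    by (simp add: quad_skew_antisym[of N \<epsilon> i "A (m - _)"] sum_negf)
  finally have "(\<Sum>k\<le>m. ?skew k (m - k)) = 0" by simp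
  moreover have "((\<lambda>y. quad_conv N \<epsilon> i A m (jet_of u y)) has_real_derivative
      (\<Sum>k\<le>m. A k (jet_of u x) * J_jet N \<epsilon> i (A (m - k)) (jet_of u x) + ?skew k (m - k))) (at x)"
    unfolding quad_conv_def by (intro DERIV_sum DERIV_quad_form A)
  ultimately show ?thesis by (simp add: sum.distrib)
qed

lemma DERIV_pencil_density:
  assumes A: "\<And>k. diff_fun N (A k)"
  shows "((\<lambda>y. pencil_density N \<epsilon> \<sigma> A n (jet_of u y)) has_real_derivative
           (\<Sum>k\<le>n. A k (jet_of u x) * pencil_apply N \<epsilon> \<sigma> A (n - k) (jet_of u x))) (at x)"
proof -
  let ?f = "\<lambda>i k. A k (jet_of u x) * J_jet N \<epsilon> (\<sigma> i) (A (n - i - k)) (jet_of u x)"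
  have "((\<lambda>y. pencil_density N \<epsilon> \<sigma> A n (jet_of u y)) has_real_derivative
      (\<Sum>i\<le>N. if i \<le> n then \<Sum>k\<le>n - i. ?f i k else 0)) (at x)"
    unfolding pencil_density_def
  proof (rule DERIV_sum)
    fix i
    show "((\<lambda>y. if i \<le> n then quad_conv N \<epsilon> (\<sigma> i) A (n - i) (jet_of u y) else 0) has_real_derivative
        (if i \<le> n then \<Sum>k\<le>n - i. ?f i k else 0)) (at x)"
      using DERIV_quad_conv[OF A, where \<epsilon> = \<epsilon> and i = "\<sigma> i" and m = "n - i" and x = x] by (cases "i \<le> n") simp_all
  qed
  also have "(\<Sum>i\<le>N. if i \<le> n then \<Sum>k\<le>n - i. ?f i k else 0) = (\<Sum>k\<le>n. \<Sum>i\<le>N. if i \<le> n - k then ?f i k else 0)"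
    by (rule sum_triangle_swap)
  also have "\<dots> = (\<Sum>k\<le>n. A k (jet_of u x) * pencil_apply N \<epsilon> \<sigma> A (n - k) (jet_of u x))"
    unfolding pencil_apply_def sum_distrib_left
    by (intro sum.cong refl) (auto simp: add.commute)
  finally show ?thesis .
qed

text \<open>The derivative of the density is the product of \<open>a\<close> with the pencil applied to \<open>a\<close>; the
  leading coefficient of \<open>a\<close> can be cancelled.\<close>

lemma pencil_apply_eq_0:
  assumes A: "\<And>k. diff_fun N (A k)"
    and const: "\<And>n y. pencil_density N \<epsilon> \<sigma> A n (jet_of u y) = c n"
    and lead: "A 0 (jet_of u x) \<noteq> 0"
  shows "pencil_apply N \<epsilon> \<sigma> A m (jet_of u x) = 0"
proof (rule convolution_eq_0_imp_eq_0[where a = "\<lambda>k. A k (jet_of u x)" and e = "\<lambda>m. pencil_apply N \<epsilon> \<sigma> A m (jet_of u x)", OF _ lead])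
  fix n
  have "((\<lambda>_. c n) has_real_derivative
      (\<Sum>k\<le>n. A k (jet_of u x) * pencil_apply N \<epsilon> \<sigma> A (n - k) (jet_of u x))) (at x)"
    using DERIV_pencil_density[where A = A and \<epsilon> = \<epsilon> and \<sigma> = \<sigma> and n = n and x = x, OF A] const by simp
  then show "(\<Sum>k\<le>n. A k (jet_of u x) * pencil_apply N \<epsilon> \<sigma> A (n - k) (jet_of u x)) = 0"
    using DERIV_const DERIV_unique by blast
qed

end

section \<open>Lenard series\<close>

text \<open>The coefficient of \<open>\<lambda>\<^sup>-\<^sup>n\<close> in \<open>pencil_density\<close> is affine in the unknown \<open>A\<^sub>n\<close>, with
  slope \<open>u\<^sub>\<sigma>\<^sub>(\<^sub>0\<^sub>) A\<^sub>0\<close> as \<open>\<epsilon>\<^sub>\<sigma>\<^sub>(\<^sub>0\<^sub>) = 0\<close>; \<open>lenard_step\<close> solves for \<open>A\<^sub>n\<close>, where \<open>c\<close> is the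
  reciprocal of that slope.\<close>

definition lenard_step ::
  "nat \<Rightarrow> (nat \<Rightarrow> real) \<Rightarrow> (nat \<Rightarrow> nat) \<Rightarrow> (jet \<Rightarrow> real) \<Rightarrow> (nat \<Rightarrow> jet \<Rightarrow> real) \<Rightarrow> nat \<Rightarrow> jet \<Rightarrow> real"
  where "lenard_step N \<epsilon> \<sigma> c A n j = - c j *
    ((\<Sum>i<N. if Suc i \<le> n then quad_conv N \<epsilon> (\<sigma> (Suc i)) A (n - Suc i) j else 0)
     + 1/2 * field_jet N (\<sigma> 0) j * (\<Sum>k\<in>{1..<n}. A k j * A (n - k) j))"

function lenard_series ::
  "nat \<Rightarrow> (nat \<Rightarrow> real) \<Rightarrow> (nat \<Rightarrow> nat) \<Rightarrow> (jet \<Rightarrow> real) \<Rightarrow> (jet \<Rightarrow> real) \<Rightarrow> nat \<Rightarrow> jet \<Rightarrow> real"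
  where "lenard_series N \<epsilon> \<sigma> a0 c n = (if n = 0 then a0 else
    lenard_step N \<epsilon> \<sigma> c (\<lambda>k. if k < n then lenard_series N \<epsilon> \<sigma> a0 c k else (\<lambda>_. 0)) n)"
  by pat_completeness auto
termination by (relation "Wellfounded.measure (\<lambda>(_, _, _, _, _, n). n)") auto

declare lenard_series.simps [simp del]

lemma lenard_step_cong:
  assumes "\<And>k. k < n \<Longrightarrow> A k = B k"
  shows "lenard_step N \<epsilon> \<sigma> c A n = lenard_step N \<epsilon> \<sigma> c B n"
proof -
  have "(if Suc l \<le> n then quad_conv N \<epsilon> i A (n - Suc l) j else 0)
      = (if Suc l \<le> n then quad_conv N \<epsilon> i B (n - Suc l) j else 0)" for i l j
    using assms unfolding quad_conv_def by (auto intro!: sum.cong)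
  then show ?thesis
    using assms unfolding lenard_step_def by (intro ext arg_cong2[where f = "(*)"] refl sum.cong) auto
qed

lemma lenard_series_0: "lenard_series N \<epsilon> \<sigma> a0 c 0 = a0"
  by (simp add: lenard_series.simps)

lemma lenard_series_pos:
  "0 < n \<Longrightarrow> lenard_series N \<epsilon> \<sigma> a0 c n = lenard_step N \<epsilon> \<sigma> c (lenard_series N \<epsilon> \<sigma> a0 c) n"
  by (subst lenard_series.simps) (auto intro: lenard_step_cong)

lemma diff_fun_lenard_series:
  assumes "diff_fun N a0" "diff_fun N c"
  shows "diff_fun N (lenard_series N \<epsilon> \<sigma> a0 c n)"
proof (induction n rule: less_induct)
  case (less n)
  show ?case
  proof (cases "n = 0")
    case True
    then show ?thesis using assms(1) by (simp add: lenard_series_0)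
  next
    case False
    have "diff_fun N (\<lambda>j. lenard_series N \<epsilon> \<sigma> a0 c k j)" if "k < n" for k
      using less that by simp
    then show ?thesis
      unfolding lenard_series_pos[OF \<open>n \<noteq> 0\<close>[unfolded neq0_conv]] lenard_step_def[abs_def] quad_conv_def
      by (intro diff_fun_mult diff_fun_add diff_fun_diff diff_fun_sum diff_fun_if diff_fun_const
          diff_fun_quad_form diff_fun_field_jet diff_fun_uminus assms(2) finite_lessThan finite_atMost
          finite_atLeastLessThan)
        (use False less in auto)
  qed
qed

lemma pencil_density_lenard_series:
  assumes eps: "epsc N \<epsilon> (\<sigma> 0) = 0" and slope: "field_jet N (\<sigma> 0) j * a0 j * c j = 1"
  shows "pencil_density N \<epsilon> \<sigma> (lenard_series N \<epsilon> \<sigma> a0 c) n j =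
    (if n = 0 then 1/2 * field_jet N (\<sigma> 0) j * a0 j ^ 2 else 0)"
proof -
  let ?A = "lenard_series N \<epsilon> \<sigma> a0 c"
  let ?U = "field_jet N (\<sigma> 0) j"
  define X where "X = (\<Sum>i<N. if Suc i \<le> n then quad_conv N \<epsilon> (\<sigma> (Suc i)) ?A (n - Suc i) j else 0)"
  define Y where "Y = (\<Sum>k\<in>{1..<n}. ?A k j * ?A (n - k) j)"
  have lead: "quad_conv N \<epsilon> (\<sigma> 0) ?A n j = 1/2 * ?U * (\<Sum>k\<le>n. ?A k j * ?A (n - k) j)"
    using eps by (simp add: quad_conv_def quad_form_def sum_distrib_left mult.assoc)
  have density: "pencil_density N \<epsilon> \<sigma> ?A n j = quad_conv N \<epsilon> (\<sigma> 0) ?A n j + X"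
    unfolding pencil_density_def X_def by (subst sum.atMost_shift) simp
  show ?thesis
  proof (cases "n = 0")
    case True
    then have "X = 0" by (simp add: X_def)
    with True show ?thesis
      using density lead by (simp add: lenard_series_0 power2_eq_square)
  next
    case False
    have An: "?A n j = - c j * (X + 1/2 * ?U * Y)"
      using False by (subst lenard_series_pos) (simp_all add: lenard_step_def X_def Y_def)
    have "(\<Sum>k\<le>n. ?A k j * ?A (n - k) j) = 2 * a0 j * ?A n j + Y"
      using False by (subst sum_atMost_split_ends) (simp_all add: Y_def lenard_series_0)
    then have "pencil_density N \<epsilon> \<sigma> ?A n j = ?U * a0 j * ?A n j + 1/2 * ?U * Y + X"
      using density lead by (simp add: algebra_simps)
    also have "\<dots> = - (?U * a0 j * c j) * (X + 1/2 * ?U * Y) + 1/2 * ?U * Y + X"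
      unfolding An by (simp add: algebra_simps)
    finally show ?thesis using slope False by simp
  qed
qed

text \<open>The leading terms \<open>2\<close> and \<open>u\<^sub>0\<^sup>-\<^sup>1\<^sup>/\<^sup>2\<close> are the nonzero entries of \<open>\<gamma>\<^sub>0\<close> and \<open>\<gamma>\<^sub>-\<^sub>1\<close>.\<close>

definition a_series :: "nat \<Rightarrow> (nat \<Rightarrow> real) \<Rightarrow> nat \<Rightarrow> jet \<Rightarrow> real" where
  "a_series N \<epsilon> = lenard_series N \<epsilon> (\<lambda>i. N - i) (\<lambda>_. 2) (\<lambda>_. - 1/2)"

definition b_series :: "nat \<Rightarrow> (nat \<Rightarrow> real) \<Rightarrow> nat \<Rightarrow> jet \<Rightarrow> real" where
  "b_series N \<epsilon> = lenard_series N \<epsilon> (\<lambda>i. i) (\<lambda>j. j 0 0 powr (- 1/2)) (\<lambda>j. j 0 0 powr (- 1/2))"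

lemma diff_fun_a_series: "diff_fun N (a_series N \<epsilon> n)"
  unfolding a_series_def by (intro diff_fun_lenard_series diff_fun_const)

lemma diff_fun_b_series: "0 < N \<Longrightarrow> diff_fun N (b_series N \<epsilon> n)"
  unfolding b_series_def by (intro diff_fun_lenard_series diff_fun_coord0_powr)

lemma powr_neg_half_mult_self: "0 < (x::real) \<Longrightarrow> x powr - (1/2) * x powr - (1/2) = 1 / x"
  by (simp add: powr_add[symmetric] powr_minus_divide)

context admissible_fields
begin

lemma pencil_apply_a_series: "pencil_apply N \<epsilon> (\<lambda>i. N - i) (a_series N \<epsilon>) m (jet_of u x) = 0"
proof (rule pencil_apply_eq_0[where c = "\<lambda>n. if n = 0 then -2 else 0"])
  show "diff_fun N (a_series N \<epsilon> k)" for k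
    by (rule diff_fun_a_series)
  show "pencil_density N \<epsilon> (\<lambda>i. N - i) (a_series N \<epsilon>) n (jet_of u y) = (if n = 0 then -2 else 0)" for n y
    unfolding a_series_def
    by (subst pencil_density_lenard_series) (simp_all add: epsc_def field_jet_def)
qed (simp add: a_series_def lenard_series_0)

lemma pencil_apply_b_series:
  assumes "0 < N"
  shows "pencil_apply N \<epsilon> (\<lambda>i. i) (b_series N \<epsilon>) m (jet_of u x) = 0"
proof (rule pencil_apply_eq_0[where c = "\<lambda>n. if n = 0 then 1/2 else 0"])
  fix n y
  have "0 < jet_of u y 0 0"
    using admissible by (simp add: admissible_def jet_of_def)
  then show "pencil_density N \<epsilon> (\<lambda>i. i) (b_series N \<epsilon>) n (jet_of u y) = (if n = 0 then 1/2 else 0)"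
    unfolding b_series_def using assms
    by (subst pencil_density_lenard_series)
      (simp_all add: epsc_def field_jet_def powr_neg_half_mult_self power2_eq_square mult.assoc)
next
  have "0 < jet_of u x 0 0"
    using admissible by (simp add: admissible_def jet_of_def)
  then show "b_series N \<epsilon> 0 (jet_of u x) \<noteq> 0"
    by (simp add: b_series_def lenard_series_0)
qed (simp add: diff_fun_b_series assms)

end

section \<open>The flows\<close>

definition cKdV_flow_pos :: "nat \<Rightarrow> (nat \<Rightarrow> real) \<Rightarrow> nat \<Rightarrow> nat \<Rightarrow> jet \<Rightarrow> real" where
  "cKdV_flow_pos N \<epsilon> s i j =
    (\<Sum>k<i. if k \<le> s then J_jet N \<epsilon> (i - Suc k) (a_series N \<epsilon> (s - k)) j else 0)"

definition cKdV_flow_neg :: "nat \<Rightarrow> (nat \<Rightarrow> real) \<Rightarrow> nat \<Rightarrow> nat \<Rightarrow> jet \<Rightarrow> real" where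
  "cKdV_flow_neg N \<epsilon> t i j =
    - (\<Sum>k\<le>N - i. if k \<le> t then J_jet N \<epsilon> (i + k) (b_series N \<epsilon> (t - k)) j else 0)"

definition cKdV_flow :: "nat \<Rightarrow> (nat \<Rightarrow> real) \<Rightarrow> int \<Rightarrow> nat \<Rightarrow> jet \<Rightarrow> real" where
  "cKdV_flow N \<epsilon> s =
    (if 0 \<le> s then cKdV_flow_pos N \<epsilon> (nat s) else cKdV_flow_neg N \<epsilon> (nat (- s - 1)))"

lemma diff_fun_cKdV_flow:
  assumes "0 < N"
  shows "diff_fun N (cKdV_flow N \<epsilon> s i)"
proof -
  have "diff_fun N (cKdV_flow_pos N \<epsilon> s' i)" "diff_fun N (cKdV_flow_neg N \<epsilon> t i)" for s' t
    unfolding cKdV_flow_pos_def[abs_def] cKdV_flow_neg_def[abs_def]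
    by (intro diff_fun_uminus diff_fun_sum diff_fun_if diff_fun_const diff_fun_J_jet
        diff_fun_a_series diff_fun_b_series assms finite_lessThan finite_atMost)+
  then show ?thesis by (simp add: cKdV_flow_def)
qed

lemma cKdV_flow_pos_0: "cKdV_flow_pos N \<epsilon> 0 (Suc i) j = J_jet N \<epsilon> i (a_series N \<epsilon> 0) j"
  by (simp add: cKdV_flow_pos_def sum.lessThan_Suc_shift)

lemma cKdV_flow_pos_Suc:
  "cKdV_flow_pos N \<epsilon> (Suc s) (Suc i) j = cKdV_flow_pos N \<epsilon> s i j + J_jet N \<epsilon> i (a_series N \<epsilon> (Suc s)) j"
  unfolding cKdV_flow_pos_def
  by (simp only: sum.lessThan_Suc_shift Suc_le_mono diff_Suc_Suc diff_zero le0 if_True add.commute)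

lemma cKdV_flow_neg_0: "cKdV_flow_neg N \<epsilon> 0 i j = - J_jet N \<epsilon> i (b_series N \<epsilon> 0) j"
  by (simp add: cKdV_flow_neg_def sum.atMost_shift)

lemma cKdV_flow_neg_Suc:
  assumes "i \<le> N"
  shows "cKdV_flow_neg N \<epsilon> (Suc t) i j =
    (if i = N then 0 else cKdV_flow_neg N \<epsilon> t (Suc i) j) - J_jet N \<epsilon> i (b_series N \<epsilon> (Suc t)) j"
proof (cases "i = N")
  case False
  then have "N - i = Suc (N - Suc i)" using assms by simp
  then show ?thesis
    unfolding cKdV_flow_neg_def
    by (simp only: False if_False sum.atMost_Suc_shift Suc_le_mono diff_Suc_Suc diff_zero le0 if_True
        add_Suc_right add_Suc add_0_right add_0 minus_add_distrib diff_conv_add_uminus add.commute)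
qed (simp add: cKdV_flow_neg_def)

context admissible_fields
begin

lemma DERIV_a_series:
  "((\<lambda>y. a_series N \<epsilon> (Suc s) (jet_of u y)) has_real_derivative cKdV_flow_pos N \<epsilon> s N (jet_of u x)) (at x)"
proof -
  have "pencil_apply N \<epsilon> (\<lambda>i. N - i) (a_series N \<epsilon>) (Suc s) (jet_of u x) =
      - total_deriv N (a_series N \<epsilon> (Suc s)) (jet_of u x) + cKdV_flow_pos N \<epsilon> s N (jet_of u x)"
    unfolding pencil_apply_def cKdV_flow_pos_def
    by (simp only: sum.atMost_shift Suc_le_mono diff_Suc_Suc diff_zero le0 if_True J_jet_last)
  then have "total_deriv N (a_series N \<epsilon> (Suc s)) (jet_of u x) = cKdV_flow_pos N \<epsilon> s N (jet_of u x)"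
    using pencil_apply_a_series by simp
  then show ?thesis
    using DERIV_total_deriv[OF diff_fun_a_series admissible] by metis
qed

lemma J_jet_b_series:
  assumes "0 < N"
  shows "J_jet N \<epsilon> 0 (b_series N \<epsilon> (Suc t)) (jet_of u x) = cKdV_flow_neg N \<epsilon> t 1 (jet_of u x)"
proof -
  have "{..N - 1} = {..<N}" using assms by auto
  then have "pencil_apply N \<epsilon> (\<lambda>i. i) (b_series N \<epsilon>) (Suc t) (jet_of u x) =
      J_jet N \<epsilon> 0 (b_series N \<epsilon> (Suc t)) (jet_of u x) - cKdV_flow_neg N \<epsilon> t 1 (jet_of u x)"
    unfolding pencil_apply_def cKdV_flow_neg_def
    by (simp only: sum.atMost_shift Suc_le_mono diff_Suc_Suc diff_zero le0 if_True
        One_nat_def add_Suc add_0 diff_minus_eq_add)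
  then show ?thesis
    using pencil_apply_b_series[OF assms] by simp
qed

end

context admissible_fields
begin

lemma cKdV_flow_0:
  assumes "i \<in> {1..N}"
  shows "cKdV_flow N \<epsilon> 0 i (jet_of u x) = deriv (u (i - 1)) x"
proof -
  obtain k where "i = Suc k" "k < N"
    using assms by (cases i) auto
  then show ?thesis
    by (simp add: cKdV_flow_def cKdV_flow_pos_0 a_series_def lenard_series_0 J_jet_const)
      (simp add: field_jet_x_def jet_of_def)
qed

lemma cKdV_flow_minus_1:
  assumes "0 < N"
  shows "cKdV_flow N \<epsilon> (-1) i (jet_of u x) = - Jop N \<epsilon> u i (\<lambda>y. 1 / sqrt (u 0 y)) x"
proof -
  have "(\<lambda>y. b_series N \<epsilon> 0 (jet_of u y)) = (\<lambda>y. 1 / sqrt (u 0 y))"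
    using admissible unfolding admissible_def
    by (simp add: b_series_def lenard_series_0 jet_of_def powr_minus_divide powr_half_sqrt less_imp_le)
  then have "Jop N \<epsilon> u i (\<lambda>y. 1 / sqrt (u 0 y)) x = J_jet N \<epsilon> i (b_series N \<epsilon> 0) (jet_of u x)"
    using Jop_eq_J_jet[OF diff_fun_b_series[OF assms]] by metis
  then show ?thesis
    by (simp add: cKdV_flow_def cKdV_flow_neg_0)
qed

lemma cKdV_flow_raise:
  assumes "0 \<le> s"
  shows "smooth_fn (\<lambda>y. a_series N \<epsilon> (Suc (nat s)) (jet_of u y))
    \<and> (\<forall>x. ((\<lambda>y. a_series N \<epsilon> (Suc (nat s)) (jet_of u y)) has_real_derivative
            cKdV_flow N \<epsilon> s N (jet_of u x)) (at x))
    \<and> (\<forall>x. \<forall>i\<in>{1..N}. cKdV_flow N \<epsilon> (s + 1) i (jet_of u x) =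
          (if i = 1 then 0 else cKdV_flow N \<epsilon> s (i - 1) (jet_of u x))
          + Jop N \<epsilon> u (i - 1) (\<lambda>y. a_series N \<epsilon> (Suc (nat s)) (jet_of u y)) x)"
proof (intro conjI allI ballI)
  have flows: "cKdV_flow N \<epsilon> s = cKdV_flow_pos N \<epsilon> (nat s)"
    "cKdV_flow N \<epsilon> (s + 1) = cKdV_flow_pos N \<epsilon> (Suc (nat s))"
    using assms by (simp_all add: cKdV_flow_def nat_add_distrib)
  show "smooth_fn (\<lambda>y. a_series N \<epsilon> (Suc (nat s)) (jet_of u y))"
    by (rule smooth_fn_diff_fun[OF diff_fun_a_series admissible])
  show "((\<lambda>y. a_series N \<epsilon> (Suc (nat s)) (jet_of u y)) has_real_derivative
      cKdV_flow N \<epsilon> s N (jet_of u x)) (at x)" for x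
    unfolding flows by (rule DERIV_a_series)
  fix x i assume "i \<in> {1..N}"
  then obtain k where "i = Suc k"
    by (cases i) auto
  then show "cKdV_flow N \<epsilon> (s + 1) i (jet_of u x) =
      (if i = 1 then 0 else cKdV_flow N \<epsilon> s (i - 1) (jet_of u x))
      + Jop N \<epsilon> u (i - 1) (\<lambda>y. a_series N \<epsilon> (Suc (nat s)) (jet_of u y)) x"
    by (simp add: flows cKdV_flow_pos_Suc Jop_eq_J_jet diff_fun_a_series)
      (simp add: cKdV_flow_pos_def)
qed

lemma cKdV_flow_lower:
  assumes "s \<le> -1" "0 < N"
  shows "smooth_fn (\<lambda>y. b_series N \<epsilon> (nat (- s)) (jet_of u y))
    \<and> (\<forall>x. Jop N \<epsilon> u 0 (\<lambda>y. b_series N \<epsilon> (nat (- s)) (jet_of u y)) x = cKdV_flow N \<epsilon> s 1 (jet_of u x))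
    \<and> (\<forall>x. \<forall>i\<in>{1..N}. cKdV_flow N \<epsilon> (s - 1) i (jet_of u x) =
          (if i = N then 0 else cKdV_flow N \<epsilon> s (i + 1) (jet_of u x))
          - Jop N \<epsilon> u i (\<lambda>y. b_series N \<epsilon> (nat (- s)) (jet_of u y)) x)"
proof (intro conjI allI ballI)
  define t where "t = nat (- s - 1)"
  have t: "nat (- s) = Suc t" "cKdV_flow N \<epsilon> s = cKdV_flow_neg N \<epsilon> t"
    "cKdV_flow N \<epsilon> (s - 1) = cKdV_flow_neg N \<epsilon> (Suc t)"
    using assms(1) by (simp_all add: t_def cKdV_flow_def nat_diff_distrib)
  note b = diff_fun_b_series[OF assms(2)]
  show "smooth_fn (\<lambda>y. b_series N \<epsilon> (nat (- s)) (jet_of u y))"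
    by (rule smooth_fn_diff_fun[OF b admissible])
  show "Jop N \<epsilon> u 0 (\<lambda>y. b_series N \<epsilon> (nat (- s)) (jet_of u y)) x = cKdV_flow N \<epsilon> s 1 (jet_of u x)" for x
    unfolding t Jop_eq_J_jet[OF b] by (rule J_jet_b_series[OF assms(2)])
  show "cKdV_flow N \<epsilon> (s - 1) i (jet_of u x) =
      (if i = N then 0 else cKdV_flow N \<epsilon> s (i + 1) (jet_of u x))
      - Jop N \<epsilon> u i (\<lambda>y. b_series N \<epsilon> (nat (- s)) (jet_of u y)) x" if "i \<in> {1..N}" for x i
    using that by (simp add: t cKdV_flow_neg_Suc Jop_eq_J_jet[OF b])
qed

end

theorem mainTheorem6:
  fixes N :: nat and \<epsilon> :: "nat \<Rightarrow> real"
  assumes "N \<ge> 1"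
  shows "\<exists>K. cKdV_hierarchy N \<epsilon> K \<and> (\<forall>s::int. \<forall>i\<in>{1..N}. is_local N (K s i))"
proof (intro exI conjI)
  have N: "0 < N" using assms by simp
  show "\<forall>s::int. \<forall>i\<in>{1..N}. is_local N (cKdV_flow N \<epsilon> s i)"
    using diff_fun_is_local[OF diff_fun_cKdV_flow[OF N]] by blast
  have adm: "admissible N u \<Longrightarrow> admissible_fields N u" for u
    by (simp add: admissible_fields_def)
  show "cKdV_hierarchy N \<epsilon> (cKdV_flow N \<epsilon>)"
    unfolding cKdV_hierarchy_def
    apply (intro conjI allI impI)
    subgoal for u x
      using admissible_fields.cKdV_flow_0 admissible_fields.cKdV_flow_minus_1[OF _ N] adm by blast
    subgoal for s
      by (intro exI[of _ "a_series N \<epsilon> (Suc (nat s))"] allI impI admissible_fields.cKdV_flow_raise adm)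
    subgoal for s
      by (intro exI[of _ "b_series N \<epsilon> (nat (- s))"] allI impI admissible_fields.cKdV_flow_lower adm N)
    done
qed

end
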